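(* A topological space $X$ has the property $\bigcup_{\mathrm{fin}}(\mathcal O,\Gamma)$ if and only if for every sequence $(u_n)_{n\in\omega}$ of open covers of $X$ there exists a sequence $(v_n)_{n\in\omega}$, each $v_n$ a finite subset of $u_n$, such that, letting $w=\{\cup v_n:n\in\omega\}$, the semifilter $\uparrow\{\mu_w(x):x\in X\}$ is meager.
   Context: For an indexed family $w=\{W_n:n\in\omega\}$ of subsets of $X$ let $\mu_w(x)=\{n\in\omega:x\in W_n\}$. $A\subset^\ast B$ means $A\setminus B$ is finite. For a family $\mathcal A$ of subsets of $\omega$, $\uparrow\mathcal A=\{B\subset\omega:\exists A\in\mathcal A\ (A\subset^\ast B)\}$; meager refers to $\mathcal P(\omega)$ identified with the Cantor space $\{0,1\}^\omega$. $w$ is a $\gamma$-cover of $X$ if $\mu_w(x)$ is cofinite in $\omega$ for every $x\in X$. $X$ has $\bigcup_{\mathrm{fin}}(\mathcal O,\Gamma)$ if for every sequence $(u_n)_{n\in\omega}$ of open covers of $X$ there are finite $v_n\subset u_n$ such that $\{\cup v_n:n\in\omega\}$ is a $\gamma$-cover of $X$. *)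

theory Defs
  imports "HOL-Analysis.Analysis"
begin

definition open_cover :: "'a topology \<Rightarrow> 'a set set \<Rightarrow> bool" where
  "open_cover X u \<longleftrightarrow> (\<forall>U\<in>u. openin X U) \<and> \<Union>u = topspace X"

definition mu :: "(nat \<Rightarrow> 'a set) \<Rightarrow> 'a \<Rightarrow> nat set" where
  "mu W x = {n. x \<in> W n}"

definition gamma_cover :: "'a topology \<Rightarrow> (nat \<Rightarrow> 'a set) \<Rightarrow> bool" where
  "gamma_cover X W \<longleftrightarrow> (\<forall>x\<in>topspace X. finite (UNIV - mu W x))"

definition Ufin_O_Gamma :: "'a topology \<Rightarrow> bool" where
  "Ufin_O_Gamma X \<longleftrightarrow>
     (\<forall>u :: nat \<Rightarrow> 'a set set. (\<forall>n. open_cover X (u n)) \<longrightarrow>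
        (\<exists>v. (\<forall>n. finite (v n) \<and> v n \<subseteq> u n) \<and> gamma_cover X (\<lambda>n. \<Union>(v n))))"

definition upclose :: "nat set set \<Rightarrow> nat set set" where
  "upclose \<A> = {B. \<exists>A\<in>\<A>. finite (A - B)}"

definition cantor_top :: "(nat \<Rightarrow> bool) topology" where
  "cantor_top = product_topology (\<lambda>_. discrete_topology (UNIV :: bool set)) UNIV"

definition nowhere_dense_in :: "'a topology \<Rightarrow> 'a set \<Rightarrow> bool" where
  "nowhere_dense_in T N \<longleftrightarrow> N \<subseteq> topspace T \<and> T interior_of (T closure_of N) = {}"

definition meager_in :: "'a topology \<Rightarrow> 'a set \<Rightarrow> bool" where
  "meager_in T S \<longleftrightarrow> (\<exists>F. countable F \<and> (\<forall>N\<in>F. nowhere_dense_in T N) \<and> S \<subseteq> \<Union>F)"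

text \<open>A family of subsets of omega is meager when its image under the identification
  P(omega) = {0,1}^omega (A maps to its characteristic function) is meager.\<close>
definition meager_fam :: "nat set set \<Rightarrow> bool" where
  "meager_fam \<A> \<longleftrightarrow> meager_in cantor_top ((\<lambda>A n. n \<in> A) ` \<A>)"

end

(* If every mu_w(x) is cofinite, the semifilter they generate consists of cofinite sets; it is
   countable, hence meager.  Conversely, apply the hypothesis to the covers whose members are the
   intersections U_0 \<inter> ... \<inter> U_n with U_i \<in> u_i.  A meager semifilter admits an interval partition
   [b k, b (k+1)) of omega such that each of its members meets almost every interval: at stage k one
   finds a block pattern on [b k, b (k+1)) that forces a point out of the first k nowhere dense sets,
   and a member missing infinitely many intervals could be enlarged, inside the semifilter, to follow
   infinitely many of these patterns.  Collecting the finitely many sets chosen in the interval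
   [b k, b (k+1)) and enlarging each to a member of u_k then gives a gamma-cover. *)
theory Submission
  imports Defs
begin

definition cylinder :: "(nat \<Rightarrow> bool) \<Rightarrow> nat \<Rightarrow> (nat \<Rightarrow> bool) set" where
  "cylinder y L = {z. \<forall>i<L. z i = y i}"

lemma topspace_cantor_top [simp]: "topspace cantor_top = UNIV"
  by (simp add: cantor_top_def)

lemma openin_cantor_top: "openin cantor_top S \<longleftrightarrow> (\<forall>x\<in>S. \<exists>L. cylinder x L \<subseteq> S)"
proof -
  have "(\<exists>U. finite {i. U i \<noteq> UNIV} \<and> x \<in> Pi\<^sub>E UNIV U \<and> Pi\<^sub>E UNIV U \<subseteq> S)
          \<longleftrightarrow> (\<exists>L. cylinder x L \<subseteq> S)" for x
  proof
    assume "\<exists>U. finite {i. U i \<noteq> UNIV} \<and> x \<in> Pi\<^sub>E UNIV U \<and> Pi\<^sub>E UNIV U \<subseteq> S"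
    then obtain U L where U: "x \<in> Pi\<^sub>E UNIV U" "Pi\<^sub>E UNIV U \<subseteq> S" "{i. U i \<noteq> UNIV} \<subseteq> {..<L}"
      using finite_nat_bounded by metis
    have "cylinder x L \<subseteq> Pi\<^sub>E UNIV U"
      using U(1,3) by (force simp: cylinder_def)
    with U(2) show "\<exists>L. cylinder x L \<subseteq> S" by blast
  next
    assume "\<exists>L. cylinder x L \<subseteq> S"
    then obtain L where L: "cylinder x L \<subseteq> S" ..
    define U where "U i = (if i < L then {x i} else UNIV)" for i
    have "Pi\<^sub>E UNIV U = cylinder x L"
      by (auto simp: U_def cylinder_def PiE_UNIV_domain split: if_splits)
    moreover have "finite {i. U i \<noteq> UNIV}"
      by (rule finite_subset[of _ "{..<L}"]) (auto simp: U_def)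
    moreover have "x \<in> cylinder x L" by (simp add: cylinder_def)
    ultimately show "\<exists>U. finite {i. U i \<noteq> UNIV} \<and> x \<in> Pi\<^sub>E UNIV U \<and> Pi\<^sub>E UNIV U \<subseteq> S"
      using L by (intro exI[of _ U]) simp
  qed
  then show ?thesis
    unfolding cantor_top_def openin_product_topology_alt by (simp add: PiE_UNIV_domain)
qed

lemma openin_cylinder: "openin cantor_top (cylinder y L)"
  unfolding openin_cantor_top cylinder_def by force

lemma nowhere_dense_in_singleton_cantor: "nowhere_dense_in cantor_top {c}"
proof -
  have "Hausdorff_space cantor_top"
    unfolding cantor_top_def by (simp add: Hausdorff_space_product_topology)
  then have closure: "cantor_top closure_of {c} = {c}"
    by (simp add: closure_of_closedin closedin_Hausdorff_singleton)
  have "T = {}" if "openin cantor_top T" "T \<subseteq> {c}" for T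
  proof (rule ccontr)
    assume "T \<noteq> {}"
    with that obtain L where "cylinder c L \<subseteq> {c}"
      unfolding openin_cantor_top by blast
    moreover have "c(L := \<not> c L) \<in> cylinder c L" by (simp add: cylinder_def)
    ultimately have "c(L := \<not> c L) = c" by blast
    then show False by (metis fun_upd_same)
  qed
  then show ?thesis
    unfolding nowhere_dense_in_def closure interior_of_eq_empty by simp
qed

lemma countable_imp_meager_in_cantor: "countable S \<Longrightarrow> meager_in cantor_top S"
  unfolding meager_in_def
  by (intro exI[of _ "(\<lambda>c. {c}) ` S"]) (auto simp: nowhere_dense_in_singleton_cantor)

lemma nowhere_dense_in_cantor_avoid:
  assumes "nowhere_dense_in cantor_top N"
  obtains z L' where "L \<le> L'" "z \<in> cylinder y L" "cylinder z L' \<inter> N = {}"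
proof -
  let ?C = "cantor_top closure_of N"
  have "y \<in> cylinder y L" by (simp add: cylinder_def)
  then have "\<not> cylinder y L \<subseteq> ?C"
    using assms openin_cylinder[of y L]
    unfolding nowhere_dense_in_def interior_of_eq_empty by blast
  then obtain z where z: "z \<in> cylinder y L" "z \<notin> ?C" by blast
  have "openin cantor_top (cylinder y L - ?C)"
    by (simp add: openin_cylinder openin_diff)
  then obtain L0 where L0: "cylinder z L0 \<subseteq> cylinder y L - ?C"
    using z unfolding openin_cantor_top by blast
  have "cylinder z (max L L0) \<subseteq> cylinder z L0"
    by (auto simp: cylinder_def)
  moreover have "N \<subseteq> ?C"
    using assms by (simp add: nowhere_dense_in_def closure_of_subset)
  ultimately have "cylinder z (max L L0) \<inter> N = {}"
    using L0 by blast
  with z(1) show thesis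
    by (intro that[of "max L L0" z]) simp_all
qed

(* The block t on [n, n') must work whatever the first n coordinates are, so it is built against
   all prefixes s at once. *)
lemma cantor_block_avoiding_prefixes:
  assumes "finite P" "\<forall>(s, N)\<in>P. nowhere_dense_in cantor_top N"
  shows "\<exists>t n'. n < n' \<and>
    (\<forall>s N. (s, N) \<in> P \<longrightarrow> cylinder (\<lambda>i. if i < n then s i else t i) n' \<inter> N = {})"
  using assms
proof (induction P rule: finite_induct)
  case empty
  show ?case by (intro exI[of _ "\<lambda>_. False"] exI[of _ "Suc n"]) auto
next
  case (insert p P)
  obtain s N where p: "p = (s, N)" by fastforce
  from insert obtain t n' where tn: "n < n'"
    "\<And>s N. (s, N) \<in> P \<Longrightarrow> cylinder (\<lambda>i. if i < n then s i else t i) n' \<inter> N = {}"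
    by auto
  have "nowhere_dense_in cantor_top N" using insert.prems p by simp
  then obtain z L where zL: "n' \<le> L" "z \<in> cylinder (\<lambda>i. if i < n then s i else t i) n'"
      "cylinder z L \<inter> N = {}"
    by (rule nowhere_dense_in_cantor_avoid)
  have old: "cylinder (\<lambda>i. if i < n then s' i else z i) L
      \<subseteq> cylinder (\<lambda>i. if i < n then s' i else t i) n'" for s'
    using zL(1,2) by (auto simp: cylinder_def)
  have new: "cylinder (\<lambda>i. if i < n then s i else z i) L = cylinder z L"
    using zL(1,2) tn(1) by (auto simp: cylinder_def)
  show ?case
  proof (intro exI[of _ z] exI[of _ L] conjI allI impI)
    show "n < L" using tn(1) zL(1) by simp
    fix s' N' assume "(s', N') \<in> insert p P"
    then consider "(s', N') = (s, N)" | "(s', N') \<in> P" using p by blast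
    then show "cylinder (\<lambda>i. if i < n then s' i else z i) L \<inter> N' = {}"
    proof cases
      case 1
      then show ?thesis using new zL(3) by (metis prod.inject)
    next
      case 2
      then show ?thesis using old[of s'] tn(2)[of s' N'] by blast
    qed
  qed
qed

lemma cantor_block_avoiding:
  assumes "finite \<N>" "\<forall>N\<in>\<N>. nowhere_dense_in cantor_top N"
  shows "\<exists>t n'. n < n' \<and> (\<forall>y. (\<forall>i\<in>{n..<n'}. y i = t i) \<longrightarrow> y \<notin> \<Union>\<N>)"
proof -
  let ?prefixes = "(\<lambda>A i. i \<in> A) ` Pow {..<n}"
  have "finite (?prefixes \<times> \<N>)" "\<forall>(s, N)\<in>?prefixes \<times> \<N>. nowhere_dense_in cantor_top N"
    using assms by auto
  then obtain t n' where tn: "n < n'"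
    "\<And>s N. (s, N) \<in> ?prefixes \<times> \<N> \<Longrightarrow> cylinder (\<lambda>i. if i < n then s i else t i) n' \<inter> N = {}"
    using cantor_block_avoiding_prefixes[of "?prefixes \<times> \<N>" n] by blast
  have "y \<notin> N" if "\<forall>i\<in>{n..<n'}. y i = t i" "N \<in> \<N>" for y N
  proof -
    let ?s = "\<lambda>i. i \<in> {i. i < n \<and> y i}"
    have "?s \<in> ?prefixes" by (rule imageI) auto
    with that(2) have "cylinder (\<lambda>i. if i < n then ?s i else t i) n' \<inter> N = {}" by (intro tn(2)) simp
    moreover have "y \<in> cylinder (\<lambda>i. if i < n then ?s i else t i) n'"
      using that(1) by (auto simp: cylinder_def)
    ultimately show ?thesis by blast
  qed
  with tn(1) show ?thesis by blast
qed

lemma strict_mono_block_unique: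
  assumes "strict_mono (b :: nat \<Rightarrow> nat)" "i \<in> {b j..<b (Suc j)}" "i \<in> {b k..<b (Suc k)}"
  shows "j = k"
proof (rule ccontr)
  assume "j \<noteq> k"
  then have "Suc j \<le> k \<or> Suc k \<le> j" by auto
  then show False
    using assms strict_mono_less_eq[OF assms(1)] by (metis atLeastLessThan_iff le_trans not_le)
qed

lemma upclose_superset: "A \<in> M \<Longrightarrow> A \<subseteq> B \<Longrightarrow> B \<in> upclose M"
  unfolding upclose_def by (metis Diff_eq_empty_iff finite.emptyI mem_Collect_eq)

lemma meager_fam_upclose_imp_interval_partition:
  assumes "meager_fam (upclose M)"
  obtains b :: "nat \<Rightarrow> nat"
  where "strict_mono b" "\<And>A. A \<in> M \<Longrightarrow> finite {k. A \<inter> {b k..<b (Suc k)} = {}}"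
proof -
  obtain F where F: "countable F" "\<forall>N\<in>F. nowhere_dense_in cantor_top N"
    "(\<lambda>A i. i \<in> A) ` upclose M \<subseteq> \<Union>F"
    using assms unfolding meager_fam_def meager_in_def by blast
  \<comment> \<open>Adding the empty set keeps the enumeration meaningful when F is empty.\<close>
  define N where "N = from_nat_into (insert {} F)"
  have range_N: "range N = insert {} F"
    unfolding N_def using F(1) by simp
  have "nowhere_dense_in cantor_top (N m)" for m
  proof -
    have "N m \<in> insert {} F" using range_N by blast
    then show ?thesis using F(2) by (auto simp: nowhere_dense_in_def)
  qed
  then have "\<forall>n k. \<exists>t n'. n < n' \<and> (\<forall>y. (\<forall>i\<in>{n..<n'}. y i = t i) \<longrightarrow> y \<notin> \<Union>(N ` {..k}))"
    by (intro allI cantor_block_avoiding) auto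
  then obtain T E where TE: "\<And>n k. n < E n k"
    "\<And>n k y. \<forall>i\<in>{n..<E n k}. y i = T n k i \<Longrightarrow> y \<notin> \<Union>(N ` {..k})"
    by metis
  define b where "b = rec_nat 0 (\<lambda>k m. E m k)"
  have b_Suc: "b (Suc k) = E (b k) k" for k
    by (simp add: b_def)
  have mono: "strict_mono b"
    unfolding strict_mono_Suc_iff using TE(1) b_Suc by simp
  show thesis
  proof (rule that[OF mono])
    fix A assume A: "A \<in> M"
    define J where "J = {k. A \<inter> {b k..<b (Suc k)} = {}}"
    show "finite J"
    proof (rule ccontr)
      assume "infinite J"
      \<comment> \<open>A' follows the avoiding pattern on every interval missed by A, yet stays in the semifilter.\<close>
      define A' where "A' = A \<union> {i. \<exists>k\<in>J. i \<in> {b k..<b (Suc k)} \<and> T (b k) k i}"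
      have "A' \<in> upclose M"
        using A by (rule upclose_superset) (auto simp: A'_def)
      then obtain m where m: "(\<lambda>i. i \<in> A') \<in> N m"
        using F(3) range_N by blast
      obtain k where k: "k \<in> J" "m \<le> k"
        using \<open>infinite J\<close> unfolding infinite_nat_iff_unbounded_le by blast
      have "\<forall>i\<in>{b k..<E (b k) k}. (i \<in> A') = T (b k) k i"
        using k(1) strict_mono_block_unique[OF mono] unfolding A'_def J_def b_Suc by blast
      then have "(\<lambda>i. i \<in> A') \<notin> \<Union>(N ` {..k})"
        by (rule TE(2))
      with m k(2) show False by blast
    qed
  qed
qed

lemma countable_cofinite_nat_sets: "countable {B :: nat set. finite (UNIV - B)}"
proof -
  have "{B :: nat set. finite (UNIV - B)} = uminus ` Collect finite"
    unfolding Compl_eq_Diff_UNIV[symmetric] by (auto intro: image_eqI[of _ _ "- _"])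
  then show ?thesis
    using countable_Collect_finite by (metis countable_image)
qed

lemma gamma_cover_imp_meager_fam:
  assumes "gamma_cover X W"
  shows "meager_fam (upclose (mu W ` topspace X))"
proof -
  have "upclose (mu W ` topspace X) \<subseteq> {B. finite (UNIV - B)}"
  proof
    fix B assume "B \<in> upclose (mu W ` topspace X)"
    then obtain A where A: "A \<in> mu W ` topspace X" "finite (A - B)"
      unfolding upclose_def by blast
    moreover have "UNIV - B \<subseteq> (UNIV - A) \<union> (A - B)" by blast
    ultimately show "B \<in> {B. finite (UNIV - B)}"
      using assms unfolding gamma_cover_def by (auto intro: finite_subset)
  qed
  then have "countable (upclose (mu W ` topspace X))"
    using countable_cofinite_nat_sets by (rule countable_subset)
  then show ?thesis
    unfolding meager_fam_def by (intro countable_imp_meager_in_cantor countable_image)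
qed

definition common_refinement :: "(nat \<Rightarrow> 'a set set) \<Rightarrow> nat \<Rightarrow> 'a set set" where
  "common_refinement u n = {\<Inter>i\<le>n. f i | f. \<forall>i\<le>n. f i \<in> u i}"

lemma common_refinement_refines:
  assumes "V \<in> common_refinement u n" "i \<le> n"
  shows "\<exists>U\<in>u i. V \<subseteq> U"
  using assms unfolding common_refinement_def by blast

lemma open_cover_common_refinement:
  assumes "\<And>n. open_cover X (u n)"
  shows "open_cover X (common_refinement u n)"
  unfolding open_cover_def
proof (intro conjI ballI subset_antisym subsetI)
  fix V assume "V \<in> common_refinement u n"
  then obtain f where "V = (\<Inter>i\<le>n. f i)" "\<forall>i\<le>n. f i \<in> u i"
    unfolding common_refinement_def by blast
  then show "openin X V"
    using assms unfolding open_cover_def by (auto intro!: openin_INT2)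
next
  fix x assume "x \<in> \<Union>(common_refinement u n)"
  then obtain V where "V \<in> common_refinement u n" "x \<in> V" by blast
  then obtain U where "U \<in> u 0" "x \<in> U"
    using common_refinement_refines[of V u n 0] by blast
  then show "x \<in> topspace X"
    using assms unfolding open_cover_def by blast
next
  fix x assume "x \<in> topspace X"
  then have "\<forall>i. \<exists>U. U \<in> u i \<and> x \<in> U"
    using assms unfolding open_cover_def by blast
  then obtain f where f: "\<And>i. f i \<in> u i \<and> x \<in> f i"
    by metis
  then have "(\<Inter>i\<le>n. f i) \<in> common_refinement u n"
    unfolding common_refinement_def by blast
  with f show "x \<in> \<Union>(common_refinement u n)" by blast
qed

lemma gamma_cover_from_interval_partition:
  assumes b: "strict_mono b"
    and finite_v: "\<And>n. finite (v n)"
    and refines: "\<And>n i V. V \<in> v n \<Longrightarrow> i \<le> n \<Longrightarrow> \<exists>U\<in>u i. V \<subseteq> U"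
    and meets: "\<And>x. x \<in> topspace X \<Longrightarrow> finite {k. mu (\<lambda>n. \<Union>(v n)) x \<inter> {b k..<b (Suc k)} = {}}"
  shows "\<exists>w. (\<forall>k. finite (w k) \<and> w k \<subseteq> u k) \<and> gamma_cover X (\<lambda>k. \<Union>(w k))"
proof -
  define enlarge where "enlarge i V = (SOME U. U \<in> u i \<and> V \<subseteq> U)" for i V
  have enlarge: "enlarge i V \<in> u i \<and> V \<subseteq> enlarge i V" if "V \<in> v n" "i \<le> n" for n i V
    using refines[OF that] unfolding enlarge_def by (rule someI2_bex) blast
  define w where "w k = enlarge k ` (\<Union>n\<in>{b k..<b (Suc k)}. v n)" for k
  have block_index: "k \<le> n" if "n \<in> {b k..<b (Suc k)}" for k n
    using seq_suble[OF b, of k] that by simp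
  show ?thesis
  proof (intro exI[of _ w] conjI allI)
    show "finite (w k)" for k
      unfolding w_def using finite_v by simp
    show "w k \<subseteq> u k" for k
      unfolding w_def using enlarge block_index by blast
    show "gamma_cover X (\<lambda>k. \<Union>(w k))"
      unfolding gamma_cover_def
    proof
      fix x assume "x \<in> topspace X"
      moreover have "UNIV - mu (\<lambda>k. \<Union>(w k)) x \<subseteq> {k. mu (\<lambda>n. \<Union>(v n)) x \<inter> {b k..<b (Suc k)} = {}}"
        unfolding mu_def w_def using enlarge block_index by blast
      ultimately show "finite (UNIV - mu (\<lambda>k. \<Union>(w k)) x)"
        using meets finite_subset by blast
    qed
  qed
qed

theorem proposition9:
  fixes X :: "'a topology"
  shows "Ufin_O_Gamma X \<longleftrightarrow>
    (\<forall>u :: nat \<Rightarrow> 'a set set. (\<forall>n. open_cover X (u n)) \<longrightarrow>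
       (\<exists>v. (\<forall>n. finite (v n) \<and> v n \<subseteq> u n) \<and>
            meager_fam (upclose ((\<lambda>x. mu (\<lambda>n. \<Union>(v n)) x) ` topspace X))))"
  (is "_ \<longleftrightarrow> (\<forall>u. ?covers u \<longrightarrow> (\<exists>v. ?selection u v \<and> ?meager v))")
proof (intro iffI allI impI)
  fix u assume "Ufin_O_Gamma X" "?covers u"
  then obtain v where "?selection u v" "gamma_cover X (\<lambda>n. \<Union>(v n))"
    unfolding Ufin_O_Gamma_def by blast
  then show "\<exists>v. ?selection u v \<and> ?meager v"
    using gamma_cover_imp_meager_fam by blast
next
  assume meager: "\<forall>u. ?covers u \<longrightarrow> (\<exists>v. ?selection u v \<and> ?meager v)"
  show "Ufin_O_Gamma X"
    unfolding Ufin_O_Gamma_def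
  proof (intro allI impI)
    fix u assume "?covers u"
    then have "?covers (common_refinement u)"
      by (simp add: open_cover_common_refinement)
    then obtain v where v: "?selection (common_refinement u) v" "?meager v"
      using meager by blast
    obtain b where b: "strict_mono b"
      and meets: "\<And>A. A \<in> mu (\<lambda>n. \<Union>(v n)) ` topspace X \<Longrightarrow> finite {k. A \<inter> {b k..<b (Suc k)} = {}}"
      using meager_fam_upclose_imp_interval_partition[OF v(2)] by metis
    have "finite (v n)" for n
      using v(1) by blast
    moreover have "\<exists>U\<in>u i. V \<subseteq> U" if "V \<in> v n" "i \<le> n" for n i V
      using v(1) common_refinement_refines that by blast
    ultimately show "\<exists>w. ?selection u w \<and> gamma_cover X (\<lambda>k. \<Union>(w k))"
      by (rule gamma_cover_from_interval_partition[OF b _ _ meets[OF imageI]])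
  qed
qed

end
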